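(* Let $k$ be a positive integer. For all $A,B\in R_k$ we have $\operatorname{T}_k(AB)=\operatorname{T}_k(BA)$ in $\mathbb{Z}/k\mathbb{Z}$.
   Context: $\mathbb{N}=\{1,2,3,\dots\}$. $R$ denotes the ring of all $\mathbb{N}\times\mathbb{N}$ integer matrices with only finitely many nonzero entries in each row and each column, with entrywise addition and multiplication $(AB)_{i,j}=\sum_{l\ge1}a_{i,l}b_{l,j}$. Fix a positive integer $k$. Partition $\mathbb{N}$ into consecutive blocks $J_1=\{1\}$ and, for $m\ge2$, $J_m=\{2+k(m-2),\dots,1+k(m-1)\}$. For $A\in R$, the block $A^{m,n}$ is the submatrix with rows indexed by $J_m$ and columns by $J_n$. $R_k$ is the subring of $A\in R$ such that for all but finitely many pairs $(m,n)$ with $m,n\ge2$, $A^{m,n}=cI_k$ for some integer $c$. For a finite square integer matrix $M$, $\operatorname{t}_k(M)\in\mathbb{Z}/k\mathbb{Z}$ is the residue class of the sum of its diagonal entries. For $A\in R_k$, $\operatorname{T}_k(A)=\sum_{n\ge1}\operatorname{t}_k(A^{n,n})\in\mathbb{Z}/k\mathbb{Z}$ (a finite sum, since $\operatorname{t}_k(cI_k)=0$). *)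

theory Defs
  imports Main
begin

text \<open>Infinite integer matrices indexed by positive naturals, represented as
  functions nat => nat => int; entries with a zero index are ignored.\<close>

type_synonym imat = "nat \<Rightarrow> nat \<Rightarrow> int"

definition row_col_finite :: "imat \<Rightarrow> bool" where
  "row_col_finite A \<longleftrightarrow>
     (\<forall>i\<ge>1. finite {j. j \<ge> 1 \<and> A i j \<noteq> 0}) \<and>
     (\<forall>j\<ge>1. finite {i. i \<ge> 1 \<and> A i j \<noteq> 0})"

definition imat_mult :: "imat \<Rightarrow> imat \<Rightarrow> imat" where
  "imat_mult A B = (\<lambda>i j. \<Sum>l\<in>{l. l \<ge> 1 \<and> A i l \<noteq> 0}. A i l * B l j)"

definition blk :: "nat \<Rightarrow> nat \<Rightarrow> nat set" where
  "blk k m = (if m = 1 then {1} else {2 + k*(m-2) .. 1 + k*(m-1)})"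

definition block_scalar :: "nat \<Rightarrow> imat \<Rightarrow> nat \<Rightarrow> nat \<Rightarrow> bool" where
  "block_scalar k A m n \<longleftrightarrow>
     (\<exists>c::int. \<forall>a<k. \<forall>b<k.
        A (2 + k*(m-2) + a) (2 + k*(n-2) + b) = (if a = b then c else 0))"

definition Rk :: "nat \<Rightarrow> imat set" where
  "Rk k = {A. row_col_finite A \<and>
              finite {(m,n). m \<ge> 2 \<and> n \<ge> 2 \<and> \<not> block_scalar k A m n}}"

definition block_trace :: "nat \<Rightarrow> imat \<Rightarrow> nat \<Rightarrow> int" where
  "block_trace k A n = (\<Sum>i\<in>blk k n. A i i)"

text \<open>T_k(A) = sum over n >= 1 of t_k(A^{n,n}), as an element of Z/kZ represented
  by its least nonnegative residue mod k; only the (finitely many) blocks with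
  nonzero residue contribute.\<close>

definition Tk :: "nat \<Rightarrow> imat \<Rightarrow> int" where
  "Tk k A = (\<Sum>n\<in>{n. n \<ge> 1 \<and> block_trace k A n mod int k \<noteq> 0}. block_trace k A n) mod int k"

end

theory Submission
  imports Defs
begin

text \<open>Write \<open>C_AB(n,m) = tr(A^{n,m} B^{m,n})\<close>, so that \<open>tr((AB)^{n,n}) = \<Sum>_m C_AB(n,m)\<close> and
  \<open>C_AB(n,m) = C_BA(m,n)\<close>. Choose \<open>N\<close> such that, for both \<open>A\<close> and \<open>B\<close>, all non-scalar
  blocks and the support of the first row and column lie within the blocks \<open>1..N\<close>.
  Then \<open>k\<close> divides \<open>C_AB(n,m)\<close> as soon as \<open>n > N\<close> or \<open>m > N\<close>: either it is
  \<open>tr(cI_k \<cdot> dI_k) = kcd\<close>, or it vanishes. Hence \<open>T_k(AB)\<close> is the residue of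
  \<open>\<Sum>_{n,m\<le>N} C_AB(n,m)\<close>, which is symmetric in \<open>A\<close> and \<open>B\<close>.\<close>

definition block_cross_trace :: "nat \<Rightarrow> imat \<Rightarrow> imat \<Rightarrow> nat \<Rightarrow> nat \<Rightarrow> int" where
  "block_cross_trace k A B n m = (\<Sum>i\<in>blk k n. \<Sum>l\<in>blk k m. A i l * B l i)"

lemma block_cross_trace_swap: "block_cross_trace k A B n m = block_cross_trace k B A m n"
  unfolding block_cross_trace_def by (subst sum.swap) (simp add: mult.commute)

lemma finite_blk [simp]: "finite (blk k m)"
  by (simp add: blk_def)

lemma blk_ge_one: "i \<in> blk k m \<Longrightarrow> 1 \<le> i"
  by (auto simp: blk_def split: if_splits)

lemma blk_beyond:
  assumes "1 \<le> N" "N < m" "l \<in> blk k m"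
  shows "1 + k * (N - 1) < l"
proof -
  have "N - 1 \<le> m - 2" using assms(2) by simp
  then have "k * (N - 1) \<le> k * (m - 2)" by (rule mult_le_mono2)
  moreover have "2 + k * (m - 2) \<le> l" using assms by (auto simp: blk_def)
  ultimately show ?thesis by linarith
qed

lemma sum_atLeastAtMost_blk:
  "(\<Sum>l\<in>{1..1 + k * M}. f l) = (\<Sum>m\<in>{1..Suc M}. \<Sum>l\<in>blk k m. f l)"
proof (induction M)
  case 0
  then show ?case by (simp add: blk_def)
next
  case (Suc M)
  have blk_last: "blk k (Suc (Suc M)) = {2 + k * M..1 + k * Suc M}"
    by (simp add: blk_def)
  have "{1..1 + k * Suc M} = {1..1 + k * M} \<union> blk k (Suc (Suc M))"
    unfolding blk_last by auto
  moreover have "{1..1 + k * M} \<inter> blk k (Suc (Suc M)) = {}"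
    unfolding blk_last by auto
  ultimately have "(\<Sum>l\<in>{1..1 + k * Suc M}. f l)
      = (\<Sum>l\<in>{1..1 + k * M}. f l) + (\<Sum>l\<in>blk k (Suc (Suc M)). f l)"
    by (simp add: sum.union_disjoint)
  then show ?case using Suc by simp
qed

lemma sum_blk_eq_sum_lessThan:
  assumes "2 \<le> n"
  shows "(\<Sum>i\<in>blk k n. f i) = (\<Sum>a<k. f (2 + k * (n - 2) + a))"
proof -
  obtain n' where n': "n = n' + 2" using assms le_Suc_ex by (metis add.commute)
  have "blk k n = {0 + (2 + k * n')..<k + (2 + k * n')}"
    by (auto simp: blk_def n')
  then show ?thesis
    by (simp only: sum.shift_bounds_nat_ivl) (simp add: n' lessThan_atLeast0 add.commute)
qed

lemma block_cross_trace_scalar_dvd: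
  assumes "2 \<le> n" "2 \<le> m" "block_scalar k A n m" "block_scalar k B m n"
  shows "int k dvd block_cross_trace k A B n m"
proof -
  obtain c where c: "\<forall>a<k. \<forall>b<k. A (2 + k * (n - 2) + a) (2 + k * (m - 2) + b) = (if a = b then c else 0)"
    using assms(3) unfolding block_scalar_def by blast
  obtain d where d: "\<forall>a<k. \<forall>b<k. B (2 + k * (m - 2) + a) (2 + k * (n - 2) + b) = (if a = b then d else 0)"
    using assms(4) unfolding block_scalar_def by blast
  have "block_cross_trace k A B n m = (\<Sum>a<k. \<Sum>b<k.
      A (2 + k * (n - 2) + a) (2 + k * (m - 2) + b) * B (2 + k * (m - 2) + b) (2 + k * (n - 2) + a))"
    unfolding block_cross_trace_def using assms by (simp add: sum_blk_eq_sum_lessThan)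
  also have "\<dots> = (\<Sum>a<k. \<Sum>b<k. if a = b then c * d else 0)"
    using c d by (intro sum.cong refl) auto
  also have "\<dots> = int k * (c * d)"
    by simp
  finally show ?thesis by simp
qed

lemma imat_mult_eq_sum:
  assumes "finite S" "0 \<notin> S" "{l. 1 \<le> l \<and> A i l \<noteq> 0} \<subseteq> S"
  shows "imat_mult A B i j = (\<Sum>l\<in>S. A i l * B l j)"
  unfolding imat_mult_def
  by (rule sum.mono_neutral_left) (use assms in \<open>auto simp: Suc_le_eq\<close>)

lemma block_trace_imat_mult:
  assumes "\<And>i l. i \<in> blk k n \<Longrightarrow> 1 \<le> l \<Longrightarrow> A i l \<noteq> 0 \<Longrightarrow> l \<le> 1 + k * M"
  shows "block_trace k (imat_mult A B) n = (\<Sum>m\<in>{1..Suc M}. block_cross_trace k A B n m)"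
proof -
  have "block_trace k (imat_mult A B) n = (\<Sum>i\<in>blk k n. \<Sum>l\<in>{1..1 + k * M}. A i l * B l i)"
    unfolding block_trace_def using assms by (intro sum.cong refl imat_mult_eq_sum) auto
  also have "\<dots> = (\<Sum>m\<in>{1..Suc M}. block_cross_trace k A B n m)"
    unfolding block_cross_trace_def sum_atLeastAtMost_blk by (rule sum.swap)
  finally show ?thesis .
qed

lemma row_support_in_blocks:
  assumes "row_col_finite A" "1 \<le> k"
  obtains M where "N \<le> M" "\<And>i l. i \<in> blk k n \<Longrightarrow> 1 \<le> l \<Longrightarrow> A i l \<noteq> 0 \<Longrightarrow> l \<le> 1 + k * M"
proof -
  have "finite {l. 1 \<le> l \<and> A i l \<noteq> 0}" if "i \<in> blk k n" for i
    using assms(1) blk_ge_one[OF that] unfolding row_col_finite_def by blast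
  then have "finite (\<Union>i\<in>blk k n. {l. 1 \<le> l \<and> A i l \<noteq> 0})"
    by simp
  then obtain M0 where M0: "\<forall>l \<in> (\<Union>i\<in>blk k n. {l. 1 \<le> l \<and> A i l \<noteq> 0}). l \<le> M0"
    using finite_nat_set_iff_bounded_le by blast
  have "M0 \<le> max N M0" by simp
  also have "\<dots> \<le> k * max N M0" using mult_le_mono1[OF assms(2), of "max N M0"] by simp
  finally have "M0 \<le> 1 + k * max N M0" by simp
  show ?thesis
  proof (rule that[of "max N M0"])
    fix i l assume "i \<in> blk k n" "1 \<le> l" "A i l \<noteq> 0"
    then have "l \<le> M0" using M0 by blast
    with \<open>M0 \<le> 1 + k * max N M0\<close> show "l \<le> 1 + k * max N M0" by simp
  qed simp
qed

text \<open>\<open>1 + k * (N - 1)\<close> is the last index of the block \<open>J_N\<close>.\<close>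

definition blocks_bounded :: "nat \<Rightarrow> imat \<Rightarrow> nat \<Rightarrow> bool" where
  "blocks_bounded k A N \<longleftrightarrow>
     (\<forall>m n. 2 \<le> m \<longrightarrow> 2 \<le> n \<longrightarrow> \<not> block_scalar k A m n \<longrightarrow> m \<le> N \<and> n \<le> N) \<and>
     (\<forall>l. 1 + k * (N - 1) < l \<longrightarrow> A 1 l = 0 \<and> A l 1 = 0)"

lemma blocks_boundedI:
  assumes "\<And>m n. 2 \<le> m \<Longrightarrow> 2 \<le> n \<Longrightarrow> \<not> block_scalar k A m n \<Longrightarrow> m \<le> N \<and> n \<le> N"
    and "\<And>l. 1 + k * (N - 1) < l \<Longrightarrow> A 1 l = 0 \<and> A l 1 = 0"
  shows "blocks_bounded k A N"
  using assms unfolding blocks_bounded_def by blast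

lemma blocks_boundedD:
  assumes "blocks_bounded k A N"
  shows "\<And>m n. 2 \<le> m \<Longrightarrow> 2 \<le> n \<Longrightarrow> \<not> block_scalar k A m n \<Longrightarrow> m \<le> N \<and> n \<le> N"
    and "\<And>l. 1 + k * (N - 1) < l \<Longrightarrow> A 1 l = 0 \<and> A l 1 = 0"
  using assms unfolding blocks_bounded_def by blast+

lemma blocks_bounded_mono:
  assumes "blocks_bounded k A N" "N \<le> N'"
  shows "blocks_bounded k A N'"
proof (rule blocks_boundedI)
  fix m n assume "2 \<le> m" "2 \<le> n" "\<not> block_scalar k A m n"
  then show "m \<le> N' \<and> n \<le> N'"
    using blocks_boundedD(1)[OF assms(1)] assms(2) by fastforce
next
  fix l assume l: "1 + k * (N' - 1) < l"
  have "N - 1 \<le> N' - 1"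
    using assms(2) by simp
  then have "k * (N - 1) \<le> k * (N' - 1)"
    by (rule mult_le_mono2)
  with l have "1 + k * (N - 1) < l" by linarith
  then show "A 1 l = 0 \<and> A l 1 = 0"
    by (rule blocks_boundedD(2)[OF assms(1)])
qed

lemma blocks_bounded_exists:
  assumes "1 \<le> k" "A \<in> Rk k"
  obtains N where "1 \<le> N" "blocks_bounded k A N"
proof -
  let ?Bad = "{(m, n). 2 \<le> m \<and> 2 \<le> n \<and> \<not> block_scalar k A m n}"
  let ?Supp = "{l. 1 \<le> l \<and> A 1 l \<noteq> 0} \<union> {l. 1 \<le> l \<and> A l 1 \<noteq> 0}"
  have "finite (fst ` ?Bad \<union> snd ` ?Bad)"
    using assms(2) by (simp add: Rk_def)
  then obtain B1 where B1: "\<forall>x \<in> fst ` ?Bad \<union> snd ` ?Bad. x \<le> B1"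
    using finite_nat_set_iff_bounded_le by blast
  have "finite ?Supp"
    using assms(2) by (simp add: Rk_def row_col_finite_def)
  then obtain B2 where B2: "\<forall>l \<in> ?Supp. l \<le> B2"
    using finite_nat_set_iff_bounded_le by blast
  have "B2 \<le> B1 + B2" by simp
  also have "\<dots> \<le> k * (B1 + B2)" using mult_le_mono1[OF assms(1), of "B1 + B2"] by simp
  finally have B2_less: "B2 < 1 + k * (B1 + B2 + 1 - 1)" by simp
  have "blocks_bounded k A (B1 + B2 + 1)"
  proof (rule blocks_boundedI)
    fix m n assume "2 \<le> m" "2 \<le> n" "\<not> block_scalar k A m n"
    then have "(m, n) \<in> ?Bad" by simp
    then have "m \<in> fst ` ?Bad" "n \<in> snd ` ?Bad"
      by (rule rev_image_eqI, simp)+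
    then have "m \<le> B1" "n \<le> B1"
      using B1 by blast+
    then show "m \<le> B1 + B2 + 1 \<and> n \<le> B1 + B2 + 1" by simp
  next
    fix l assume "1 + k * (B1 + B2 + 1 - 1) < l"
    with B2_less have "B2 < l" by linarith
    then have "l \<notin> ?Supp" using B2 by (meson leD)
    moreover have "1 \<le> l" using \<open>1 + k * (B1 + B2 + 1 - 1) < l\<close> by simp
    ultimately show "A 1 l = 0 \<and> A l 1 = 0" by simp
  qed
  then show ?thesis using that[of "B1 + B2 + 1"] by simp
qed

lemma block_cross_trace_dvd_outside:
  assumes "blocks_bounded k A N" "blocks_bounded k B N" "1 \<le> N" "1 \<le> n" "1 \<le> m"
    and "N < n \<or> N < m"
  shows "int k dvd block_cross_trace k A B n m"
proof -
  consider "n = 1" | "m = 1" | "2 \<le> n" "2 \<le> m"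
    using assms(4,5) by linarith
  then show ?thesis
  proof cases
    case 1
    then have "N < m" using assms(3,6) by simp
    then have "\<forall>l\<in>blk k m. A 1 l = 0"
      using blocks_boundedD(2)[OF assms(1)] blk_beyond[OF assms(3)] by blast
    then show ?thesis using 1 by (simp add: block_cross_trace_def blk_def)
  next
    case 2
    then have "N < n" using assms(3,6) by simp
    then have "\<forall>i\<in>blk k n. A i 1 = 0"
      using blocks_boundedD(2)[OF assms(1)] blk_beyond[OF assms(3)] by blast
    then show ?thesis using 2 by (simp add: block_cross_trace_def blk_def)
  next
    case 3
    then have "block_scalar k A n m" "block_scalar k B m n"
      using blocks_boundedD(1)[OF assms(1)] blocks_boundedD(1)[OF assms(2)] assms(6)
      by (meson not_le)+
    then show ?thesis using 3 block_cross_trace_scalar_dvd by blast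
  qed
qed

lemma block_trace_imat_mult_mod:
  assumes "1 \<le> k" "row_col_finite A" "blocks_bounded k A N" "blocks_bounded k B N"
    and "1 \<le> N" "1 \<le> n"
  shows "block_trace k (imat_mult A B) n mod int k
       = (\<Sum>m\<in>{1..N}. block_cross_trace k A B n m) mod int k"
proof -
  obtain M where "N \<le> M" and supp:
    "\<And>i l. i \<in> blk k n \<Longrightarrow> 1 \<le> l \<Longrightarrow> A i l \<noteq> 0 \<Longrightarrow> l \<le> 1 + k * M"
    using row_support_in_blocks[OF assms(2,1), of N n] by blast
  have split: "{1..Suc M} = {1..N} \<union> {Suc N..Suc M}"
    using \<open>N \<le> M\<close> by auto
  have "int k dvd (\<Sum>m\<in>{Suc N..Suc M}. block_cross_trace k A B n m)"
    using block_cross_trace_dvd_outside[OF assms(3-6)] by (intro dvd_sum) auto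
  moreover have "block_trace k (imat_mult A B) n = (\<Sum>m\<in>{1..Suc M}. block_cross_trace k A B n m)"
    using supp by (rule block_trace_imat_mult)
  then have "block_trace k (imat_mult A B) n
      = (\<Sum>m\<in>{1..N}. block_cross_trace k A B n m) + (\<Sum>m\<in>{Suc N..Suc M}. block_cross_trace k A B n m)"
    unfolding split by (simp add: sum.union_disjoint)
  ultimately show ?thesis by (auto elim!: dvdE)
qed

lemma Tk_eq_partial_sum:
  assumes "\<And>n. N < n \<Longrightarrow> block_trace k A n mod int k = 0"
  shows "Tk k A = (\<Sum>n\<in>{1..N}. block_trace k A n) mod int k"
proof -
  let ?S = "{n. 1 \<le> n \<and> block_trace k A n mod int k \<noteq> 0}"
  have "?S \<subseteq> {1..N}"
    using assms by (auto simp: not_less[symmetric])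
  then have "(\<Sum>n\<in>?S. block_trace k A n mod int k) = (\<Sum>n\<in>{1..N}. block_trace k A n mod int k)"
    by (intro sum.mono_neutral_left) auto
  then have "(\<Sum>n\<in>?S. block_trace k A n mod int k) mod int k
      = (\<Sum>n\<in>{1..N}. block_trace k A n mod int k) mod int k"
    by (rule arg_cong)
  then show ?thesis
    unfolding Tk_def mod_sum_eq .
qed

lemma Tk_imat_mult:
  assumes "1 \<le> k" "row_col_finite A" "blocks_bounded k A N" "blocks_bounded k B N" "1 \<le> N"
  shows "Tk k (imat_mult A B) = (\<Sum>n\<in>{1..N}. \<Sum>m\<in>{1..N}. block_cross_trace k A B n m) mod int k"
proof -
  note trace_mod = block_trace_imat_mult_mod[OF assms]
  have "block_trace k (imat_mult A B) n mod int k = 0" if "N < n" for n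
    using that assms trace_mod[of n]
    by (simp add: mod_sum_eq[symmetric] block_cross_trace_dvd_outside)
  then have "Tk k (imat_mult A B) = (\<Sum>n\<in>{1..N}. block_trace k (imat_mult A B) n) mod int k"
    by (rule Tk_eq_partial_sum)
  also have "\<dots> = (\<Sum>n\<in>{1..N}. block_trace k (imat_mult A B) n mod int k) mod int k"
    by (simp add: mod_sum_eq)
  also have "\<dots> = (\<Sum>n\<in>{1..N}. (\<Sum>m\<in>{1..N}. block_cross_trace k A B n m) mod int k) mod int k"
    by (rule arg_cong[where f = "\<lambda>x. x mod int k"], rule sum.cong) (simp_all add: trace_mod)
  finally show ?thesis by (simp add: mod_sum_eq)
qed

theorem mainTheorem6:
  fixes k :: nat and A B :: imat
  assumes "k \<ge> 1" and "A \<in> Rk k" and "B \<in> Rk k"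
  shows "Tk k (imat_mult A B) = Tk k (imat_mult B A)"
proof -
  obtain NA NB where "1 \<le> NA" "blocks_bounded k A NA" "blocks_bounded k B NB"
    using blocks_bounded_exists assms by metis
  define N where "N = max NA NB"
  have bounded: "blocks_bounded k A N" "blocks_bounded k B N" "1 \<le> N"
    using \<open>1 \<le> NA\<close> \<open>blocks_bounded k A NA\<close> \<open>blocks_bounded k B NB\<close> blocks_bounded_mono
    unfolding N_def by auto
  have "row_col_finite A" "row_col_finite B"
    using assms(2,3) by (simp_all add: Rk_def)
  then have "Tk k (imat_mult A B) = (\<Sum>n\<in>{1..N}. \<Sum>m\<in>{1..N}. block_cross_trace k A B n m) mod int k"
    and "Tk k (imat_mult B A) = (\<Sum>n\<in>{1..N}. \<Sum>m\<in>{1..N}. block_cross_trace k B A n m) mod int k"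
    using assms(1) bounded by (simp_all add: Tk_imat_mult)
  moreover have "(\<Sum>n\<in>{1..N}. \<Sum>m\<in>{1..N}. block_cross_trace k A B n m)
      = (\<Sum>n\<in>{1..N}. \<Sum>m\<in>{1..N}. block_cross_trace k B A n m)"
    by (subst sum.swap) (simp add: block_cross_trace_swap)
  ultimately show ?thesis by simp
qed

end
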